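(* Let $H_n(x)=\frac{n!}{2^n}\sum_{m=0}^{\lfloor n/2\rfloor}\frac{(-1)^m}{m!(n-2m)!}(2x)^{n-2m}$ be the monic Hermite polynomials, and for each $n$ let $a_{n,0},\dots,a_{n,n}$ be the coefficients whose associated polynomial is $P_n=H_n$. Then $a_{n,n}=\dfrac{h_n}{2^n n!}$, where $h_0=1$, $h_1=1$, $h_2=3$ and $h_n=h_{n-1}+2(n-1)h_{n-2}$ for $n\ge2$. Moreover $$h_n=\frac{1}{2\sqrt{\pi}}\int_{-\infty}^{\infty}x^n e^{-(x-1)^2/4}\,dx,$$ i.e. $h_n$ is the $n$-th moment of a Gaussian random variable with mean $1$ and variance $2$.
   Context: $\imath=\sqrt{-1}$. $\mathcal{A}$ denotes the quotient of the free associative $\mathbb{C}$-algebra on two noncommuting generators $p,q$ by the two-sided ideal generated by $qp-pq-\imath$, and $z=\tfrac12(qp+pq)\in\mathcal A$. For $n\ge0$ and complex numbers $a_{n,0},\dots,a_{n,n}$, there is a unique polynomial $P_n\in\mathbb{C}[X]$ of degree at most $n$ with $\sum_{k=0}^n a_{n,k}q^kp^nq^{n-k}=P_n(z)$ in $\mathcal A$; it is called the polynomial associated to $\{a_{n,k}\}$. Since the words $q^kp^nq^{n-k}$, $0\le k\le n$, are linearly independent in $\mathcal A$ with associated polynomials spanning polynomials of degree $\le n$, each polynomial of degree $\le n$ determines the coefficients $a_{n,k}$ uniquely. *)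

theory Defs
  imports "HOL-Analysis.Analysis" "HOL-Library.Poly_Mapping"
    "HOL-Computational_Algebra.Polynomial"
begin

text \<open>Free associative complex algebra on the two noncommuting generators p, q:
  finitely supported complex linear combinations of words over the alphabet {P, Q}.\<close>

datatype gen = P | Q

type_synonym fralg = "gen list \<Rightarrow>\<^sub>0 complex"

definition word :: "gen list \<Rightarrow> fralg" where
  "word w = Poly_Mapping.single w 1"

definition fscale :: "complex \<Rightarrow> fralg \<Rightarrow> fralg" where
  "fscale c f = Poly_Mapping.map (\<lambda>x. c * x) f"

definition fmul :: "fralg \<Rightarrow> fralg \<Rightarrow> fralg" where
  "fmul f g = (\<Sum>u\<in>Poly_Mapping.keys f. \<Sum>v\<in>Poly_Mapping.keys g.
                 Poly_Mapping.single (u @ v) (Poly_Mapping.lookup f u * Poly_Mapping.lookup g v))"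

primrec fpow :: "fralg \<Rightarrow> nat \<Rightarrow> fralg" where
  "fpow x 0 = word []"
| "fpow x (Suc n) = fmul x (fpow x n)"

text \<open>Two-sided ideal generated by qp - pq - i: it is spanned by u (qp - pq - i) v
  for words u, v.\<close>
inductive_set weyl_ideal :: "fralg set" where
  zero: "0 \<in> weyl_ideal"
| add: "x \<in> weyl_ideal \<Longrightarrow> y \<in> weyl_ideal \<Longrightarrow> x + y \<in> weyl_ideal"
| gen: "fscale c (word (u @ [Q, P] @ v) - word (u @ [P, Q] @ v) - fscale \<i> (word (u @ v)))
          \<in> weyl_ideal"

definition weyl_eq :: "fralg \<Rightarrow> fralg \<Rightarrow> bool" where
  "weyl_eq x y \<longleftrightarrow> x - y \<in> weyl_ideal"

definition weyl_z :: fralg where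
  "weyl_z = fscale (1/2) (word [Q, P] + word [P, Q])"

definition peval :: "complex poly \<Rightarrow> fralg \<Rightarrow> fralg" where
  "peval p x = (\<Sum>j\<le>degree p. fscale (coeff p j) (fpow x j))"

definition hermite :: "nat \<Rightarrow> complex poly" where
  "hermite n = (\<Sum>m\<le>n div 2.
     monom (fact n / 2 ^ n * (-1) ^ m / (fact m * fact (n - 2 * m)) * 2 ^ (n - 2 * m))
           (n - 2 * m))"

fun hseq :: "nat \<Rightarrow> nat" where
  "hseq 0 = 1"
| "hseq (Suc 0) = 1"
| "hseq (Suc (Suc n)) = hseq (Suc n) + 2 * (Suc n) * hseq n"

end

theory Submission
  imports Defs "HOL-Probability.Distributions"
begin

text \<open>
  Let \<open>p\<close> act on \<open>\<complex>[X]\<close> as multiplication by \<open>X\<close> and \<open>q\<close> as \<open>\<i> d/dX\<close>; this kills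
  \<open>qp - pq - \<i>\<close>, so it is a representation of the Weyl algebra. On the constant \<open>1\<close> every
  word \<open>q\<^sup>kp\<^sup>nq\<^sup>n\<^sup>-\<^sup>k\<close> with \<open>k < n\<close> vanishes, \<open>q\<^sup>np\<^sup>n\<close> gives \<open>\<i>\<^sup>n n!\<close>, and \<open>z\<close> acts as the scalar
  \<open>\<i>/2\<close>. Hence \<open>a\<^sub>n\<^sub>,\<^sub>n \<i>\<^sup>n n! = H\<^sub>n(\<i>/2) = (\<i>/2)\<^sup>n \<Sum>\<^sub>m n!/(m!(n-2m)!)\<close>. The last sum satisfies
  the recursion of \<open>h\<^sub>n\<close> termwise, and expanding \<open>x\<^sup>n = ((x-1)+1)\<^sup>n\<close> against the central
  moments of the normal distribution with mean 1 and variance 2 yields the same sum.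
\<close>

lemma lookup_fscale: "Poly_Mapping.lookup (fscale c x) w = c * Poly_Mapping.lookup x w"
  unfolding fscale_def by (simp add: Poly_Mapping.map.rep_eq when_def)

lemma keys_fscale: "Poly_Mapping.keys (fscale c x) \<subseteq> Poly_Mapping.keys x"
  by (auto simp: in_keys_iff lookup_fscale)

lemma smult_sum_right: "smult c (\<Sum>i\<in>I. f i) = (\<Sum>i\<in>I. smult c (f i))"
  by (induction I rule: infinite_finite_induct) (auto simp: smult_add_right)

primrec fock_act :: "gen list \<Rightarrow> complex poly \<Rightarrow> complex poly" where
  "fock_act [] f = f"
| "fock_act (g # w) f =
     (case g of P \<Rightarrow> [:0, 1:] * fock_act w f | Q \<Rightarrow> smult \<i> (pderiv (fock_act w f)))"

lemma fock_act_append: "fock_act (u @ v) f = fock_act u (fock_act v f)"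
  by (induction u) (auto split: gen.split)

lemma fock_act_add: "fock_act w (f + g) = fock_act w f + fock_act w g"
  by (induction w) (auto split: gen.split simp: pderiv_add algebra_simps smult_add_right)

lemma fock_act_smult: "fock_act w (smult c f) = smult c (fock_act w f)"
  by (induction w) (auto split: gen.split simp: pderiv_smult algebra_simps)

lemma fock_act_zero: "fock_act w 0 = 0"
  using fock_act_smult[of w 0 0] by simp

lemma fock_act_diff: "fock_act w (f - g) = fock_act w f - fock_act w g"
  using fock_act_add[of w "f - g" g] by simp

lemma fock_act_sum: "fock_act w (\<Sum>i\<in>I. g i) = (\<Sum>i\<in>I. fock_act w (g i))"
  by (induction I rule: infinite_finite_induct) (auto simp: fock_act_zero fock_act_add)

lemma fock_act_commutator: "fock_act [Q, P] f - fock_act [P, Q] f = smult \<i> f"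
  by (simp add: pderiv_mult pderiv_pCons algebra_simps smult_add_right)

definition fock_rep :: "fralg \<Rightarrow> complex poly \<Rightarrow> complex poly" where
  "fock_rep x f =
     (\<Sum>w\<in>Poly_Mapping.keys x. smult (Poly_Mapping.lookup x w) (fock_act w f))"

lemma fock_rep_superset:
  assumes "finite S" "Poly_Mapping.keys x \<subseteq> S"
  shows "fock_rep x f = (\<Sum>w\<in>S. smult (Poly_Mapping.lookup x w) (fock_act w f))"
  unfolding fock_rep_def
  by (rule sum.mono_neutral_left) (use assms in \<open>auto simp: in_keys_iff\<close>)

lemma fock_rep_add: "fock_rep (x + y) f = fock_rep x f + fock_rep y f"
proof -
  let ?S = "Poly_Mapping.keys x \<union> Poly_Mapping.keys y"
  have "fock_rep (x + y) f = (\<Sum>w\<in>?S. smult (Poly_Mapping.lookup (x + y) w) (fock_act w f))"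
    by (rule fock_rep_superset) (use keys_add[of x y] in auto)
  also have "\<dots> = (\<Sum>w\<in>?S. smult (Poly_Mapping.lookup x w) (fock_act w f))
                 + (\<Sum>w\<in>?S. smult (Poly_Mapping.lookup y w) (fock_act w f))"
    by (simp add: lookup_add smult_add_left sum.distrib)
  also have "\<dots> = fock_rep x f + fock_rep y f"
    by (subst (1 2) fock_rep_superset[symmetric]) auto
  finally show ?thesis .
qed

lemma fock_rep_fscale: "fock_rep (fscale c x) f = smult c (fock_rep x f)"
proof -
  have "fock_rep (fscale c x) f =
      (\<Sum>w\<in>Poly_Mapping.keys x. smult (Poly_Mapping.lookup (fscale c x) w) (fock_act w f))"
    by (rule fock_rep_superset) (auto simp: keys_fscale[THEN subsetD])
  then show ?thesis
    by (simp add: fock_rep_def lookup_fscale smult_sum_right)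
qed

lemma fock_rep_diff: "fock_rep (x - y) f = fock_rep x f - fock_rep y f"
  using fock_rep_add[of "x - y" y f] by simp

lemma fock_rep_sum: "fock_rep (\<Sum>i\<in>I. g i) f = (\<Sum>i\<in>I. fock_rep (g i) f)"
  by (induction I rule: infinite_finite_induct) (simp_all add: fock_rep_def[of 0] fock_rep_add)

lemma fock_rep_single: "fock_rep (Poly_Mapping.single w c) f = smult c (fock_act w f)"
  by (simp add: fock_rep_def)

lemma fock_rep_word: "fock_rep (word w) f = fock_act w f"
  by (simp add: word_def fock_rep_single)

lemma fock_rep_smult: "fock_rep x (smult c f) = smult c (fock_rep x f)"
  by (simp add: fock_rep_def fock_act_smult smult_sum_right mult.commute)

lemma fock_rep_fmul: "fock_rep (fmul x y) f = fock_rep x (fock_rep y f)"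
proof -
  have "fock_rep (fmul x y) f = (\<Sum>u\<in>Poly_Mapping.keys x. \<Sum>v\<in>Poly_Mapping.keys y.
      smult (Poly_Mapping.lookup x u * Poly_Mapping.lookup y v) (fock_act u (fock_act v f)))"
    by (simp add: fmul_def fock_rep_sum fock_rep_single fock_act_append)
  also have "\<dots> = fock_rep x (fock_rep y f)"
    by (simp add: fock_rep_def fock_act_sum fock_act_smult smult_sum_right)
  finally show ?thesis .
qed

lemma fock_rep_weyl_ideal: "x \<in> weyl_ideal \<Longrightarrow> fock_rep x f = 0"
proof (induction rule: weyl_ideal.induct)
  case zero
  then show ?case by (simp add: fock_rep_def)
next
  case (add x y)
  then show ?case by (simp add: fock_rep_add)
next
  case (gen c u v)
  have "fock_act u (fock_act [Q, P] (fock_act v f) - fock_act [P, Q] (fock_act v f)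
          - smult \<i> (fock_act v f)) = 0"
    by (simp only: fock_act_commutator diff_self fock_act_zero)
  then show ?case
    by (simp add: fock_rep_fscale fock_rep_diff fock_rep_word fock_act_append
        fock_act_diff fock_act_smult)
qed

lemma weyl_eq_fock_rep: "weyl_eq x y \<Longrightarrow> fock_rep x f = fock_rep y f"
  unfolding weyl_eq_def using fock_rep_weyl_ideal fock_rep_diff by fastforce

lemma fock_rep_fpow_const:
  assumes "fock_rep x 1 = [:c:]"
  shows "fock_rep (fpow x j) 1 = [:c ^ j:]"
proof (induction j)
  case 0
  then show ?case by (simp add: fock_rep_word)
next
  case (Suc j)
  have "fock_rep (fpow x (Suc j)) 1 = fock_rep x (smult (c ^ j) 1)"
    by (simp add: fock_rep_fmul Suc)
  also have "\<dots> = [:c ^ Suc j:]"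
    by (simp only: fock_rep_smult assms) (simp add: mult.commute)
  finally show ?case .
qed

lemma fock_rep_peval_const:
  assumes "fock_rep x 1 = [:c:]"
  shows "fock_rep (peval p x) 1 = [:poly p c:]"
  by (simp add: peval_def fock_rep_sum fock_rep_fscale fock_rep_fpow_const[OF assms]
      poly_altdef sum_to_poly)

lemma fock_rep_weyl_z: "fock_rep weyl_z 1 = [:\<i> / 2:]"
  by (simp add: weyl_z_def fock_rep_fscale fock_rep_add fock_rep_word pderiv_pCons)

lemma fock_act_replicate_Q_1: "fock_act (replicate j Q) 1 = (if j = 0 then 1 else 0)"
  by (induction j) auto

lemma fock_act_replicate_P_1: "fock_act (replicate j P) 1 = monom 1 j"
  by (induction j) (auto simp: monom_Suc)

lemma fock_act_replicate_Q_monom: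
  "j \<le> m \<Longrightarrow>
   fock_act (replicate j Q) (monom 1 m) = smult (\<i> ^ j * fact m / fact (m - j)) (monom 1 (m - j))"
proof (induction j)
  case 0
  then show ?case by simp
next
  case (Suc j)
  have "fact (m - j) = of_nat (m - j) * (fact (m - Suc j) :: complex)"
    using Suc.prems by (metis Suc_diff_Suc Suc_le_lessD fact_Suc)
  with Suc show ?case
    by (simp add: pderiv_smult pderiv_monom smult_monom field_simps)
qed

lemma fock_act_normal_word_1:
  "k \<le> n \<Longrightarrow>
   fock_act (replicate k Q @ replicate n P @ replicate (n - k) Q) 1 =
     (if k = n then [:\<i> ^ n * fact n:] else 0)"
  by (auto simp: fock_act_append fock_act_replicate_Q_1 fock_act_zero
      fock_act_replicate_P_1 fock_act_replicate_Q_monom)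

lemma weyl_top_coeff_eq_poly:
  assumes "weyl_eq
     (\<Sum>k\<le>n. fscale (a k) (word (replicate k Q @ replicate n P @ replicate (n - k) Q)))
     (peval p weyl_z)"
  shows "a n * \<i> ^ n * fact n = poly p (\<i> / 2)"
proof -
  let ?L = "\<Sum>k\<le>n. fscale (a k) (word (replicate k Q @ replicate n P @ replicate (n - k) Q))"
  have "fock_rep ?L 1 = [:poly p (\<i> / 2):]"
    using weyl_eq_fock_rep[OF assms] fock_rep_peval_const[OF fock_rep_weyl_z] by simp
  moreover have "fock_rep ?L 1 = (\<Sum>k\<le>n. if k = n then [:a n * \<i> ^ n * fact n:] else 0)"
    unfolding fock_rep_sum fock_rep_fscale fock_rep_word
    by (rule sum.cong) (auto simp: fock_act_normal_word_1)
  ultimately show ?thesis by simp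
qed

text \<open>The common value of \<open>h\<^sub>n\<close>, of \<open>(-2\<i>)\<^sup>n H\<^sub>n(\<i>/2)\<close> and of the Gaussian moment.\<close>
definition hseq_term :: "nat \<Rightarrow> nat \<Rightarrow> real" where
  "hseq_term n m = (if 2 * m \<le> n then fact n / (fact m * fact (n - 2 * m)) else 0)"

definition hseq_closed :: "nat \<Rightarrow> real" where
  "hseq_closed n = (\<Sum>m\<le>n. hseq_term n m)"

lemma hseq_closed_eq: "hseq_closed n = (\<Sum>m\<le>n div 2. fact n / (fact m * fact (n - 2 * m)))"
proof -
  have "hseq_closed n = (\<Sum>m\<le>n div 2. hseq_term n m)"
    unfolding hseq_closed_def by (rule sum.mono_neutral_right) (auto simp: hseq_term_def)
  also have "\<dots> = (\<Sum>m\<le>n div 2. fact n / (fact m * fact (n - 2 * m)))"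
    by (rule sum.cong) (auto simp: hseq_term_def)
  finally show ?thesis .
qed

lemma hseq_term_Suc_Suc:
  "hseq_term (Suc (Suc n)) (Suc m) = hseq_term (Suc n) (Suc m) + 2 * real (Suc n) * hseq_term n m"
proof (cases "2 * m + 1 \<le> n")
  case True
  then obtain j where j: "n = 2 * m + 1 + j"
    using le_Suc_ex by blast
  have diffs: "Suc (Suc n) - 2 * Suc m = Suc j" "Suc n - 2 * Suc m = j" "n - 2 * m = Suc j"
    using j by auto
  have facts: "fact (Suc (Suc n)) = real (n + 2) * real (n + 1) * fact n"
    "fact (Suc n) = real (n + 1) * (fact n :: real)"
    "fact (Suc m) = real (m + 1) * (fact m :: real)"
    "fact (Suc j) = real (j + 1) * (fact j :: real)"
    by (simp_all add: fact_Suc algebra_simps)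
  have "real n = 2 * real m + 1 + real j"
    using j by simp
  then have key: "real (n + 2) * real (n + 1) * fact n / (real (m + 1) * fact m * (real (j + 1) * fact j))
     = real (n + 1) * fact n / (real (m + 1) * fact m * fact j)
       + 2 * real (Suc n) * (fact n / (fact m * (real (j + 1) * fact j)))"
    by (simp add: divide_simps) (simp add: algebra_simps)
  have "2 * Suc m \<le> Suc (Suc n)" "2 * Suc m \<le> Suc n" "2 * m \<le> n"
    using True by auto
  then show ?thesis
    unfolding hseq_term_def by (simp only: if_True diffs facts key)
next
  case False
  show ?thesis
  proof (cases "n = 2 * m")
    case True
    have "(fact m :: real) > 0" "1 + real m > 0"
      by simp_all
    then show ?thesis
      unfolding hseq_term_def using True
      by (simp add: fact_Suc divide_simps) (simp add: algebra_simps)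
  next
    case False
    with \<open>\<not> 2 * m + 1 \<le> n\<close> show ?thesis
      unfolding hseq_term_def by simp
  qed
qed

lemma hseq_term_0: "hseq_term n 0 = 1"
  by (simp add: hseq_term_def)

lemma hseq_term_eq_0: "n < 2 * m \<Longrightarrow> hseq_term n m = 0"
  by (simp add: hseq_term_def)

lemma hseq_closed_Suc_Suc:
  "hseq_closed (Suc (Suc n)) = hseq_closed (Suc n) + 2 * real (Suc n) * hseq_closed n"
proof -
  have "hseq_closed (Suc (Suc n)) =
      hseq_term (Suc (Suc n)) 0 + (\<Sum>m\<le>Suc n. hseq_term (Suc (Suc n)) (Suc m))"
    unfolding hseq_closed_def by (rule sum.atMost_Suc_shift)
  also have "\<dots> = (hseq_term (Suc n) 0 + (\<Sum>m\<le>Suc n. hseq_term (Suc n) (Suc m)))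
                 + 2 * real (Suc n) * (\<Sum>m\<le>Suc n. hseq_term n m)"
    by (simp only: hseq_term_Suc_Suc hseq_term_0 sum.distrib sum_distrib_left)
  also have "hseq_term (Suc n) 0 + (\<Sum>m\<le>Suc n. hseq_term (Suc n) (Suc m)) = hseq_closed (Suc n)"
    unfolding hseq_closed_def by (subst sum.atMost_Suc_shift) (simp add: hseq_term_eq_0)
  also have "(\<Sum>m\<le>Suc n. hseq_term n m) = hseq_closed n"
    unfolding hseq_closed_def by (simp add: hseq_term_eq_0)
  finally show ?thesis .
qed

lemma hseq_eq_closed: "real (hseq n) = hseq_closed n"
proof (induction n rule: hseq.induct)
  case (3 n)
  then show ?case by (simp add: hseq_closed_Suc_Suc algebra_simps)
qed (simp_all add: hseq_closed_eq)

lemma poly_hermite_half_i: "poly (hermite n) (\<i> / 2) = \<i> ^ n / 2 ^ n * of_real (hseq_closed n)"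
proof -
  have "poly (hermite n) (\<i> / 2) =
      (\<Sum>m\<le>n div 2. \<i> ^ n / 2 ^ n * of_real (fact n / (fact m * fact (n - 2 * m))))"
    unfolding hermite_def poly_sum poly_monom
  proof (rule sum.cong[OF refl])
    fix m
    assume "m \<in> {..n div 2}"
    then have "2 * m \<le> n"
      by auto
    then have "\<i> ^ n = \<i> ^ (n - 2 * m) * (\<i>\<^sup>2) ^ m"
      by (metis le_add_diff_inverse2 power_add power_mult)
    then have "\<i> ^ n = (-1) ^ m * \<i> ^ (n - 2 * m)"
      by simp
    then show "fact n / 2 ^ n * (-1) ^ m / (fact m * fact (n - 2 * m)) * 2 ^ (n - 2 * m)
               * (\<i> / 2) ^ (n - 2 * m)
             = \<i> ^ n / 2 ^ n * of_real (fact n / (fact m * fact (n - 2 * m)))"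
      by (simp add: power_divide field_simps)
  qed
  then show ?thesis
    by (simp add: hseq_closed_eq sum_distrib_left)
qed

definition normal_central_moment :: "nat \<Rightarrow> real" where
  "normal_central_moment k = (if even k then fact k / fact (k div 2) else 0)"

lemma normal_central_moment_integral:
  "has_bochner_integral lborel
     (\<lambda>x. normal_density 1 (sqrt 2) x * (x - 1) ^ k) (normal_central_moment k)"
proof (cases "even k")
  case True
  then obtain j where "k = 2 * j"
    by blast
  with normal_moment_even[where \<mu> = 1 and \<sigma> = "sqrt 2" and k = j] show ?thesis
    by (simp add: normal_central_moment_def)
next
  case False
  then obtain j where "k = 2 * j + 1"
    using oddE by blast
  with normal_moment_odd[where \<mu> = 1 and \<sigma> = "sqrt 2" and k = j] show ?thesis
    by (simp add: normal_central_moment_def)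
qed

lemma normal_moment_integral:
  "has_bochner_integral lborel (\<lambda>x. normal_density 1 (sqrt 2) x * x ^ n)
     (\<Sum>k\<le>n. real (n choose k) * normal_central_moment k)"
proof -
  have "normal_density 1 (sqrt 2) x * x ^ n =
      (\<Sum>k\<le>n. real (n choose k) * (normal_density 1 (sqrt 2) x * (x - 1) ^ k))" for x
    using binomial_ring[of "x - 1" 1 n] by (simp add: sum_distrib_left algebra_simps)
  then show ?thesis
    by (simp only:) (intro has_bochner_integral_sum has_bochner_integral_mult_right
        normal_central_moment_integral)
qed

lemma binomial_sum_normal_central_moment:
  "(\<Sum>k\<le>n. real (n choose k) * normal_central_moment k) = hseq_closed n"
proof -
  have "(\<Sum>k\<le>n. real (n choose k) * normal_central_moment k) =
      (\<Sum>k\<in>(\<lambda>m. 2 * m) ` {..n div 2}. real (n choose k) * normal_central_moment k)"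
    by (rule sum.mono_neutral_right) (auto simp: normal_central_moment_def elim!: evenE)
  also have "\<dots> = (\<Sum>m\<le>n div 2. real (n choose (2 * m)) * normal_central_moment (2 * m))"
    by (subst sum.reindex) (auto simp: inj_on_def)
  also have "\<dots> = hseq_closed n"
    unfolding hseq_closed_eq
    by (rule sum.cong) (auto simp: binomial_fact normal_central_moment_def)
  finally show ?thesis .
qed

lemma gaussian_moment_has_integral:
  "((\<lambda>x::real. 1 / (2 * sqrt pi) * (x ^ n * exp (- (x - 1)\<^sup>2 / 4)))
     has_integral hseq_closed n) UNIV"
proof -
  have "sqrt (2 * pi * (sqrt 2)\<^sup>2) = 2 * sqrt pi"
    by (simp add: real_sqrt_mult)
  then have density: "(\<lambda>x::real. 1 / (2 * sqrt pi) * (x ^ n * exp (- (x - 1)\<^sup>2 / 4))) =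
      (\<lambda>x. normal_density 1 (sqrt 2) x * x ^ n)"
    by (simp add: normal_density_def fun_eq_iff)
  show ?thesis
    unfolding density
    using has_integral_integral_lborel[OF integrable.intros[OF normal_moment_integral]]
      has_bochner_integral_integral_eq[OF normal_moment_integral]
    by (simp add: binomial_sum_normal_central_moment)
qed

theorem lemma3p6:
  fixes n :: nat and a :: "nat \<Rightarrow> complex"
  assumes "weyl_eq
     (\<Sum>k\<le>n. fscale (a k) (word (replicate k Q @ replicate n P @ replicate (n - k) Q)))
     (peval (hermite n) weyl_z)"
  shows "a n = of_nat (hseq n) / (2 ^ n * fact n) \<and>
         ((\<lambda>x::real. 1 / (2 * sqrt pi) * (x ^ n * exp (- (x - 1)\<^sup>2 / 4)))
           has_integral real (hseq n)) UNIV"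
proof
  have "a n * \<i> ^ n * fact n = \<i> ^ n / 2 ^ n * of_real (hseq_closed n)"
    using weyl_top_coeff_eq_poly[OF assms] poly_hermite_half_i by simp
  moreover have "(of_nat (hseq n) :: complex) = of_real (hseq_closed n)"
    by (metis hseq_eq_closed of_real_of_nat_eq)
  ultimately show "a n = of_nat (hseq n) / (2 ^ n * fact n)"
    by (simp add: field_simps)
  show "((\<lambda>x::real. 1 / (2 * sqrt pi) * (x ^ n * exp (- (x - 1)\<^sup>2 / 4)))
           has_integral real (hseq n)) UNIV"
    using gaussian_moment_has_integral hseq_eq_closed by simp
qed

end
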